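(* Let $X$ be a nonempty compact metric space and $Y\subseteq X$ a dense subset, endowed with the induced metric. Then $d^{us}_{GH}(X,Y)=0$.
   Context: For a metric space, $|xy|$ denotes distance. A set-valued map $f:X\rightrightarrows Y$ assigns to each $x\in X$ a nonempty $f(x)\subseteq Y$ and is identified with its graph. A correspondence between $X$ and $Y$ is a subset $R\subseteq X\times Y$ whose projections to $X$ and to $Y$ are both surjective, regarded as the set-valued map $x\mapsto R(x)=\{y:(x,y)\in R\}$; $R^{-1}=\{(y,x):(x,y)\in R\}$; $\mathcal R(X,Y)$ is the set of all correspondences. The distortion of a nonempty $\sigma\subseteq X\times Y$ is $\operatorname{dis}\sigma=\sup\{||xx'|-|yy'||:(x,y),(x',y')\in\sigma\}\in[0,\infty]$. A set-valued map $f$ is upper semicontinuous if for every $x$ and every open $U\supseteq f(x)$ there is a neighborhood $V$ of $x$ with $f(x')\subseteq U$ for all $x'\in V$. $\mathcal R_{us}(X,Y)$ is the set of $R\in\mathcal R(X,Y)$ with both $R$ and $R^{-1}$ upper semicontinuous, and $d^{us}_{GH}(X,Y)=\frac12\inf\{\operatorname{dis}R:R\in\mathcal R_{us}(X,Y)\}$. *)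

theory Defs
  imports "HOL-Analysis.Analysis"
begin

definition correspondence :: "'a set \<Rightarrow> 'b set \<Rightarrow> ('a \<times> 'b) set \<Rightarrow> bool" where
  "correspondence X Y R \<longleftrightarrow> R \<subseteq> X \<times> Y \<and> fst ` R = X \<and> snd ` R = Y"

definition dis :: "('a::metric_space \<times> 'b::metric_space) set \<Rightarrow> ereal" where
  "dis R = (SUP p\<in>R. SUP q\<in>R.
      ereal \<bar>dist (fst p) (fst q) - dist (snd p) (snd q)\<bar>)"

definition usc :: "'a::metric_space set \<Rightarrow> 'b::metric_space set \<Rightarrow> ('a \<times> 'b) set \<Rightarrow> bool" where
  "usc X Y R \<longleftrightarrow> (\<forall>x\<in>X. \<forall>U. openin (top_of_set Y) U \<and> R `` {x} \<subseteq> U \<longrightarrow>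
      (\<exists>V. openin (top_of_set X) V \<and> x \<in> V \<and> (\<forall>x'\<in>V. R `` {x'} \<subseteq> U)))"

definition corr_us :: "'a::metric_space set \<Rightarrow> 'b::metric_space set \<Rightarrow> ('a \<times> 'b) set set" where
  "corr_us X Y = {R. correspondence X Y R \<and> usc X Y R \<and> usc Y X (converse R)}"

definition dGH_us :: "'a::metric_space set \<Rightarrow> 'b::metric_space set \<Rightarrow> ereal" where
  "dGH_us X Y = ereal (1/2) * (INF R\<in>corr_us X Y. dis R)"

end

theory Submission
  imports Defs
begin

text \<open>Pick a finite \<open>\<epsilon>\<close>-net \<open>F \<subseteq> Y\<close> of \<open>X\<close> and relate \<open>x \<in> X\<close> with \<open>y \<in> Y\<close> whenever
  both lie within \<open>\<epsilon>\<close> of a common point of \<open>F\<close>. The triangle inequality bounds the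
  distortion of this correspondence by \<open>4\<epsilon>\<close>. Because \<open>F\<close> is finite, the points of \<open>F\<close>
  farther than \<open>\<epsilon>\<close> from \<open>x\<close> stay farther than \<open>\<epsilon>\<close> from all points near \<open>x\<close>; so the
  images of nearby points are contained in the image of \<open>x\<close>, and the correspondence is
  upper semicontinuous in both directions.\<close>

definition common_center_rel :: "'a::metric_space set \<Rightarrow> 'a set \<Rightarrow> 'a set \<Rightarrow> real \<Rightarrow> ('a \<times> 'a) set"
  where "common_center_rel A B F e =
    {(a, b). a \<in> A \<and> b \<in> B \<and> (\<exists>c\<in>F. dist a c \<le> e \<and> dist b c \<le> e)}"

lemma converse_common_center_rel:
  "converse (common_center_rel A B F e) = common_center_rel B A F e"
  unfolding common_center_rel_def by auto

lemma common_center_rel_Image_shrinks_locally: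
  assumes "finite F" and "x \<in> A"
  obtains V where "openin (top_of_set A) V" and "x \<in> V"
    and "\<And>x'. x' \<in> V \<Longrightarrow> common_center_rel A B F e `` {x'} \<subseteq> common_center_rel A B F e `` {x}"
proof
  define far where "far = (\<Union>c\<in>{c\<in>F. e < dist x c}. cball c e)"
  have "closed far"
    unfolding far_def using assms(1) by (intro closed_UN) auto
  then have "openin (top_of_set A) (A \<inter> - far)"
    by (intro openin_open_Int) (simp add: open_Compl)
  then show "openin (top_of_set A) (A - far)"
    by (simp add: Diff_eq)
  show "x \<in> A - far"
    using assms(2) unfolding far_def by (auto simp: dist_commute)
  fix x' assume "x' \<in> A - far"
  have "dist x c \<le> e" if "c \<in> F" "dist x' c \<le> e" for c
  proof (rule ccontr)
    assume "\<not> dist x c \<le> e"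
    then have "x' \<in> far"
      using that unfolding far_def by (auto simp: dist_commute)
    with \<open>x' \<in> A - far\<close> show False by blast
  qed
  then show "common_center_rel A B F e `` {x'} \<subseteq> common_center_rel A B F e `` {x}"
    using assms(2) unfolding common_center_rel_def by auto
qed

lemma usc_common_center_rel:
  assumes "finite F"
  shows "usc A B (common_center_rel A B F e)"
  unfolding usc_def
proof (intro ballI allI impI)
  fix x U
  assume "x \<in> A" and U: "openin (top_of_set B) U \<and> common_center_rel A B F e `` {x} \<subseteq> U"
  obtain V where "openin (top_of_set A) V" "x \<in> V"
    and "\<And>x'. x' \<in> V \<Longrightarrow> common_center_rel A B F e `` {x'} \<subseteq> common_center_rel A B F e `` {x}"
    using common_center_rel_Image_shrinks_locally[OF assms \<open>x \<in> A\<close>] by blast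
  with U show "\<exists>V. openin (top_of_set A) V \<and> x \<in> V \<and> (\<forall>x'\<in>V. common_center_rel A B F e `` {x'} \<subseteq> U)"
    by blast
qed

lemma correspondence_common_center_rel:
  assumes "F \<subseteq> A \<inter> B" and "A \<union> B \<subseteq> (\<Union>c\<in>F. cball c e)"
  shows "correspondence A B (common_center_rel A B F e)"
  unfolding correspondence_def
proof (intro conjI subset_antisym)
  show "common_center_rel A B F e \<subseteq> A \<times> B"
    unfolding common_center_rel_def by auto
  then show "fst ` common_center_rel A B F e \<subseteq> A" and "snd ` common_center_rel A B F e \<subseteq> B"
    by auto
  show "A \<subseteq> fst ` common_center_rel A B F e"
  proof
    fix a assume "a \<in> A"
    then obtain c where "c \<in> F" "dist a c \<le> e"
      using assms(2) by (auto simp: dist_commute)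
    moreover have "dist c c \<le> e"
      using \<open>dist a c \<le> e\<close> by (metis dist_self order_trans zero_le_dist)
    ultimately have "(a, c) \<in> common_center_rel A B F e"
      using assms(1) \<open>a \<in> A\<close> unfolding common_center_rel_def by (auto intro!: bexI[of _ c])
    then show "a \<in> fst ` common_center_rel A B F e"
      by force
  qed
  show "B \<subseteq> snd ` common_center_rel A B F e"
  proof
    fix b assume "b \<in> B"
    then obtain c where "c \<in> F" "dist b c \<le> e"
      using assms(2) by (auto simp: dist_commute)
    moreover have "dist c c \<le> e"
      using \<open>dist b c \<le> e\<close> by (metis dist_self order_trans zero_le_dist)
    ultimately have "(c, b) \<in> common_center_rel A B F e"
      using assms(1) \<open>b \<in> B\<close> unfolding common_center_rel_def by (auto intro!: bexI[of _ c])
    then show "b \<in> snd ` common_center_rel A B F e"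
      by force
  qed
qed

lemma common_center_rel_in_corr_us:
  assumes "finite F" and "F \<subseteq> A \<inter> B" and "A \<union> B \<subseteq> (\<Union>c\<in>F. cball c e)"
  shows "common_center_rel A B F e \<in> corr_us A B"
proof -
  have "usc B A (converse (common_center_rel A B F e))"
    using usc_common_center_rel[OF assms(1)] by (simp add: converse_common_center_rel)
  then show ?thesis
    using correspondence_common_center_rel[OF assms(2,3)] usc_common_center_rel[OF assms(1)]
    unfolding corr_us_def by blast
qed

lemma dis_common_center_rel_le: "dis (common_center_rel A B F e) \<le> ereal (4 * e)"
  unfolding dis_def
proof (intro SUP_least)
  fix p q assume "p \<in> common_center_rel A B F e" "q \<in> common_center_rel A B F e"
  then obtain c d where
    c: "dist (fst p) c \<le> e" "dist (snd p) c \<le> e" and d: "dist (fst q) d \<le> e" "dist (snd q) d \<le> e"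
    unfolding common_center_rel_def by auto
  have "\<bar>dist (fst p) (fst q) - dist (snd p) (snd q)\<bar> \<le> dist (fst p) (snd p) + dist (fst q) (snd q)"
    using dist_triangle[of "fst p" "fst q" "snd p"] dist_triangle[of "snd p" "snd q" "fst q"]
      dist_triangle[of "snd p" "fst q" "fst p"] dist_triangle[of "fst q" "snd p" "snd q"]
    by (simp add: dist_commute abs_le_iff)
  also have "\<dots> \<le> 4 * e"
    using c d dist_triangle2[of "fst p" "snd p" c] dist_triangle2[of "fst q" "snd q" d] by linarith
  finally show "ereal \<bar>dist (fst p) (fst q) - dist (snd p) (snd q)\<bar> \<le> ereal (4 * e)"
    by simp
qed

lemma dis_nonneg:
  assumes "R \<noteq> {}"
  shows "0 \<le> dis R"
proof -
  obtain p where "p \<in> R" using assms by auto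
  then have "ereal \<bar>dist (fst p) (fst p) - dist (snd p) (snd p)\<bar> \<le> dis R"
    unfolding dis_def by (intro SUP_upper2[OF \<open>p \<in> R\<close>] SUP_upper)
  then show ?thesis by (simp add: zero_ereal_def)
qed

lemma dGH_us_eq_0I:
  assumes "X \<noteq> {}" and "\<And>e. 0 < e \<Longrightarrow> \<exists>R\<in>corr_us X Y. dis R \<le> ereal e"
  shows "dGH_us X Y = 0"
proof -
  have "0 \<le> (INF R\<in>corr_us X Y. dis R)"
  proof (rule INF_greatest)
    fix R assume "R \<in> corr_us X Y"
    then have "R \<noteq> {}"
      using assms(1) unfolding corr_us_def correspondence_def by auto
    then show "0 \<le> dis R" by (rule dis_nonneg)
  qed
  moreover have "(INF R\<in>corr_us X Y. dis R) \<le> 0"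
  proof (rule ereal_le_epsilon2)
    fix e :: real assume "0 < e"
    then obtain R where "R \<in> corr_us X Y" "dis R \<le> ereal e"
      using assms(2) by blast
    then show "(INF R\<in>corr_us X Y. dis R) \<le> 0 + ereal e"
      by (simp add: INF_lower2)
  qed
  ultimately have "(INF R\<in>corr_us X Y. dis R) = 0"
    by (rule antisym[rotated])
  then show ?thesis
    by (simp add: dGH_us_def)
qed

lemma finite_net_in_dense_subset:
  assumes "compact X" and "X \<subseteq> closure Y" and "0 < e"
  obtains F where "F \<subseteq> Y" and "finite F" and "X \<subseteq> (\<Union>c\<in>F. cball c e)"
proof -
  have "X \<subseteq> (\<Union>c\<in>Y. ball c e)"
  proof
    fix x assume "x \<in> X"
    then obtain y where "y \<in> Y" "dist y x < e"
      using assms(2,3) closure_approachable by blast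
    then show "x \<in> (\<Union>c\<in>Y. ball c e)" by auto
  qed
  then obtain F where "F \<subseteq> Y" "finite F" "X \<subseteq> (\<Union>c\<in>F. ball c e)"
    using compactE_image[OF assms(1), of Y "\<lambda>c. ball c e"] by auto
  moreover have "(\<Union>c\<in>F. ball c e) \<subseteq> (\<Union>c\<in>F. cball c e)"
    by (intro UN_mono) auto
  ultimately show ?thesis
    by (intro that) auto
qed

theorem mainTheorem7:
  fixes X Y :: "'a::metric_space set"
  assumes "X \<noteq> {}" and "compact X" and "Y \<subseteq> X" and "X \<subseteq> closure Y"
  shows "dGH_us X Y = 0"
proof (rule dGH_us_eq_0I[OF assms(1)])
  fix e :: real assume "0 < e"
  then have "0 < e / 4" by simp
  then obtain F where "F \<subseteq> Y" "finite F" "X \<subseteq> (\<Union>c\<in>F. cball c (e / 4))"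
    by (rule finite_net_in_dense_subset[OF assms(2,4)])
  then have "common_center_rel X Y F (e / 4) \<in> corr_us X Y"
    using assms(3) by (intro common_center_rel_in_corr_us) auto
  moreover have "dis (common_center_rel X Y F (e / 4)) \<le> ereal e"
    using dis_common_center_rel_le[of X Y F "e / 4"] by simp
  ultimately show "\<exists>R\<in>corr_us X Y. dis R \<le> ereal e" by blast
qed

end
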